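(* Let $n\ge1$ and consider the map $f:\mathbb{H}\to\mathbb{H}$, $f(t)=t^n$, viewed as a map $\mathbb{R}^4\to\mathbb{R}^4$: writing $(x+\mathbf{i}y+\mathbf{j}z+\mathbf{k}w)^n=f_1+\mathbf{i}f_2+\mathbf{j}f_3+\mathbf{k}f_4$ with $f_r\in\mathbb{R}[x,y,z,w]$, set $f=(f_1,f_2,f_3,f_4)$. Then $|J(f)|\ge 0$ at every point of $\mathbb{R}^4$.
   Context: $\mathbb{H}$ is the real quaternion algebra with basis $1,\mathbf{i},\mathbf{j},\mathbf{k}$ and the usual relations; it is identified with $\mathbb{R}^4$ via $x+\mathbf{i}y+\mathbf{j}z+\mathbf{k}w\mapsto(x,y,z,w)$. A map $f:\mathbb{H}\to\mathbb{H}$ with $f=f_1+\mathbf{i}f_2+\mathbf{j}f_3+\mathbf{k}f_4$ is regarded as $(f_1,f_2,f_3,f_4):\mathbb{R}^4\to\mathbb{R}^4$; $J(f)=[\partial f_i/\partial x_j]$ with $(x_1,x_2,x_3,x_4)=(x,y,z,w)$, and $|J(f)|$ is its determinant. *)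

theory Defs
  imports "HOL-Analysis.Analysis"
begin

datatype quat = Quat real real real real

fun qmul :: "quat \<Rightarrow> quat \<Rightarrow> quat" where
  "qmul (Quat a1 b1 c1 d1) (Quat a2 b2 c2 d2) =
     Quat (a1*a2 - b1*b2 - c1*c2 - d1*d2)
          (a1*b2 + b1*a2 + c1*d2 - d1*c2)
          (a1*c2 - b1*d2 + c1*a2 + d1*b2)
          (a1*d2 + b1*c2 - c1*b2 + d1*a2)"

fun qpow :: "quat \<Rightarrow> nat \<Rightarrow> quat" where
  "qpow q 0 = Quat 1 0 0 0"
| "qpow q (Suc n) = qmul (qpow q n) q"

definition vec_to_quat :: "real^4 \<Rightarrow> quat" where
  "vec_to_quat v = Quat (v$1) (v$2) (v$3) (v$4)"

fun quat_to_vec :: "quat \<Rightarrow> real^4" where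
  "quat_to_vec (Quat a b c d) = vector [a, b, c, d]"

definition qpow_map :: "nat \<Rightarrow> real^4 \<Rightarrow> real^4" where
  "qpow_map n v = quat_to_vec (qpow (vec_to_quat v) n)"

end

theory Submission
  imports Defs
begin

text \<open>Write t = a + v with v purely imaginary and s = |v|^2. Since v^2 = -s, the powers of t stay in
  the plane spanned by 1 and v: t^n = A_n(a,s) + B_n(a,s) v, where A_n + i \<surd>s B_n = (a + i \<surd>s)^n.
  Hence t \<mapsto> t^n commutes with rotations of the imaginary part, and its Jacobian determinant is
  B^2 (A_a (B + 2 s B_s) - 2 s A_s B_a). Holomorphy of z^n gives the Cauchy-Riemann equations
  A_a = B + 2 s B_s and B_a = -2 A_s in the variables (a, s), so the determinant equals
  B^2 (A_a^2 + 4 s A_s^2) \<ge> 0.\<close>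

lemma det_4:
  "det (A::'a::comm_ring_1^4^4) =
     A$1$1 * A$2$2 * A$3$3 * A$4$4 - A$1$1 * A$2$2 * A$3$4 * A$4$3
   - A$1$1 * A$2$3 * A$3$2 * A$4$4 + A$1$1 * A$2$3 * A$3$4 * A$4$2
   + A$1$1 * A$2$4 * A$3$2 * A$4$3 - A$1$1 * A$2$4 * A$3$3 * A$4$2
   - A$1$2 * A$2$1 * A$3$3 * A$4$4 + A$1$2 * A$2$1 * A$3$4 * A$4$3
   + A$1$2 * A$2$3 * A$3$1 * A$4$4 - A$1$2 * A$2$3 * A$3$4 * A$4$1
   - A$1$2 * A$2$4 * A$3$1 * A$4$3 + A$1$2 * A$2$4 * A$3$3 * A$4$1
   + A$1$3 * A$2$1 * A$3$2 * A$4$4 - A$1$3 * A$2$1 * A$3$4 * A$4$2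
   - A$1$3 * A$2$2 * A$3$1 * A$4$4 + A$1$3 * A$2$2 * A$3$4 * A$4$1
   + A$1$3 * A$2$4 * A$3$1 * A$4$2 - A$1$3 * A$2$4 * A$3$2 * A$4$1
   - A$1$4 * A$2$1 * A$3$2 * A$4$3 + A$1$4 * A$2$1 * A$3$3 * A$4$2
   + A$1$4 * A$2$2 * A$3$1 * A$4$3 - A$1$4 * A$2$2 * A$3$3 * A$4$1
   - A$1$4 * A$2$3 * A$3$1 * A$4$2 + A$1$4 * A$2$3 * A$3$2 * A$4$1"
proof -
  have "finite {2::4, 3, 4}" "1 \<notin> {2::4, 3, 4}"
       "finite {3::4, 4}" "2 \<notin> {3::4, 4}"
       "finite {4::4}" "3 \<notin> {4::4}"
    by auto
  note expand = sum_over_permutations_insert[OF this(1,2)] sum_over_permutations_insert[OF this(3,4)]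
    sum_over_permutations_insert[OF this(5,6)]
  show ?thesis
    unfolding det_def UNIV_4 expand permutes_sing
    by (simp add: sign_swap_id permutation_swap_id sign_compose permutation_compose swap_id_eq
        algebra_simps)
qed

lemma vector_4 [simp]:
  "(vector [x, y, z, w] :: ('a::zero)^4)$1 = x"
  "(vector [x, y, z, w] :: ('a::zero)^4)$2 = y"
  "(vector [x, y, z, w] :: ('a::zero)^4)$3 = z"
  "(vector [x, y, z, w] :: ('a::zero)^4)$4 = w"
  unfolding vector_def by simp_all

lemma vector_4_eq_axis:
  "(vector [x, y, z, w] :: real^4) =
     x *\<^sub>R axis 1 1 + y *\<^sub>R axis 2 1 + z *\<^sub>R axis 3 1 + w *\<^sub>R axis 4 1"
  by (simp add: vec_eq_iff forall_4 axis_def)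

lemma has_derivative_vec_nth [derivative_intros]:
  "((\<lambda>v. v$i) has_derivative (\<lambda>h. h$i)) F"
  by (rule bounded_linear_imp_has_derivative[OF bounded_linear_vec_nth])

definition imag_norm2 :: "real^4 \<Rightarrow> real" where
  "imag_norm2 v = (v$2)^2 + (v$3)^2 + (v$4)^2"

lemma has_derivative_imag_norm2:
  "(imag_norm2 has_derivative (\<lambda>h. 2 * (v$2 * h$2 + v$3 * h$3 + v$4 * h$4))) (at v)"
  unfolding imag_norm2_def
  by (auto intro!: derivative_eq_intros simp: fun_eq_iff algebra_simps)

definition axial_map :: "(real \<Rightarrow> real \<Rightarrow> real) \<Rightarrow> (real \<Rightarrow> real \<Rightarrow> real) \<Rightarrow> real^4 \<Rightarrow> real^4" where
  "axial_map A B v =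
     vector [A (v$1) (imag_norm2 v), B (v$1) (imag_norm2 v) * v$2,
             B (v$1) (imag_norm2 v) * v$3, B (v$1) (imag_norm2 v) * v$4]"

lemma has_derivative_compose_real_imag_norm2:
  assumes "((\<lambda>z. F (fst z) (snd z)) has_derivative (\<lambda>h. Fa * fst h + Fs * snd h))
             (at (p$1, imag_norm2 p))"
  shows "((\<lambda>v. F (v$1) (imag_norm2 v)) has_derivative
           (\<lambda>h. Fa * h$1 + Fs * (2 * (p$2 * h$2 + p$3 * h$3 + p$4 * h$4)))) (at p)"
  using has_derivative_compose[OF
      has_derivative_Pair[OF has_derivative_vec_nth has_derivative_imag_norm2] assms]
  by simp

lemma det_jacobian_axial_map:
  fixes A B :: "real \<Rightarrow> real \<Rightarrow> real" and p :: "real^4"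
  defines "a \<equiv> p$1" and "s \<equiv> imag_norm2 p"
  assumes A: "((\<lambda>z. A (fst z) (snd z)) has_derivative (\<lambda>h. Aa * fst h + As * snd h)) (at (a, s))"
    and B: "((\<lambda>z. B (fst z) (snd z)) has_derivative (\<lambda>h. Ba * fst h + Bs * snd h)) (at (a, s))"
  shows "det (jacobian (axial_map A B) (at p)) =
           (B a s)^2 * (Aa * (B a s + 2 * s * Bs) - 2 * s * As * Ba)"
proof -
  define D :: "real^4 \<Rightarrow> real^4" where "D h =
      (Aa * h$1 + As * (2 * (p$2 * h$2 + p$3 * h$3 + p$4 * h$4))) *\<^sub>R axis 1 1
    + ((Ba * h$1 + Bs * (2 * (p$2 * h$2 + p$3 * h$3 + p$4 * h$4))) * p$2 + B a s * h$2) *\<^sub>R axis 2 1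
    + ((Ba * h$1 + Bs * (2 * (p$2 * h$2 + p$3 * h$3 + p$4 * h$4))) * p$3 + B a s * h$3) *\<^sub>R axis 3 1
    + ((Ba * h$1 + Bs * (2 * (p$2 * h$2 + p$3 * h$3 + p$4 * h$4))) * p$4 + B a s * h$4) *\<^sub>R axis 4 1"
    for h
  note dA = has_derivative_compose_real_imag_norm2[OF A[unfolded a_def s_def]]
  note dB = has_derivative_compose_real_imag_norm2[OF B[unfolded a_def s_def]]
  have "(axial_map A B has_derivative D) (at p)"
    unfolding axial_map_def[abs_def] vector_4_eq_axis D_def[abs_def] a_def s_def
    by (auto intro!: derivative_eq_intros dA dB simp: fun_eq_iff algebra_simps)
  then have J: "jacobian (axial_map A B) (at p) = matrix D"
    unfolding jacobian_def by (simp add: frechet_derivative_at[symmetric])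
  have s: "s = (p$2)^2 + (p$3)^2 + (p$4)^2"
    unfolding s_def imag_norm2_def ..
  show ?thesis
    unfolding J det_4 by (simp add: matrix_def axis_def D_def s) algebra
qed

text \<open>re_pow n and im_pow n are the A_n and B_n above; the functions suffixed _da and _ds below
  are their partial derivatives in a and in s.\<close>

fun re_pow :: "nat \<Rightarrow> real \<Rightarrow> real \<Rightarrow> real" and im_pow :: "nat \<Rightarrow> real \<Rightarrow> real \<Rightarrow> real" where
  "re_pow 0 a s = 1"
| "im_pow 0 a s = 0"
| "re_pow (Suc n) a s = a * re_pow n a s - s * im_pow n a s"
| "im_pow (Suc n) a s = re_pow n a s + a * im_pow n a s"

lemma qpow_Quat:
  "qpow (Quat a b c d) n =
     Quat (re_pow n a (b^2 + c^2 + d^2)) (im_pow n a (b^2 + c^2 + d^2) * b)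
          (im_pow n a (b^2 + c^2 + d^2) * c) (im_pow n a (b^2 + c^2 + d^2) * d)"
  by (induction n) (auto simp: algebra_simps power2_eq_square)

lemma qpow_map_eq_axial_map: "qpow_map n = axial_map (re_pow n) (im_pow n)"
  by (simp add: fun_eq_iff qpow_map_def axial_map_def vec_to_quat_def imag_norm2_def qpow_Quat)

fun re_pow_da :: "nat \<Rightarrow> real \<Rightarrow> real \<Rightarrow> real" and im_pow_da :: "nat \<Rightarrow> real \<Rightarrow> real \<Rightarrow> real" where
  "re_pow_da 0 a s = 0"
| "im_pow_da 0 a s = 0"
| "re_pow_da (Suc n) a s = re_pow n a s + a * re_pow_da n a s - s * im_pow_da n a s"
| "im_pow_da (Suc n) a s = re_pow_da n a s + im_pow n a s + a * im_pow_da n a s"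

fun re_pow_ds :: "nat \<Rightarrow> real \<Rightarrow> real \<Rightarrow> real" and im_pow_ds :: "nat \<Rightarrow> real \<Rightarrow> real \<Rightarrow> real" where
  "re_pow_ds 0 a s = 0"
| "im_pow_ds 0 a s = 0"
| "re_pow_ds (Suc n) a s = a * re_pow_ds n a s - im_pow n a s - s * im_pow_ds n a s"
| "im_pow_ds (Suc n) a s = re_pow_ds n a s + a * im_pow_ds n a s"

lemma has_derivative_re_im_pow:
  "((\<lambda>z. re_pow n (fst z) (snd z)) has_derivative
      (\<lambda>h. re_pow_da n a s * fst h + re_pow_ds n a s * snd h)) (at (a, s))
 \<and> ((\<lambda>z. im_pow n (fst z) (snd z)) has_derivative
      (\<lambda>h. im_pow_da n a s * fst h + im_pow_ds n a s * snd h)) (at (a, s))"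
proof (induction n)
  case 0
  then show ?case by simp
next
  case (Suc n)
  then show ?case
    by (auto intro!: derivative_eq_intros simp: fun_eq_iff algebra_simps)
qed

lemma re_im_pow_cauchy_riemann:
  "re_pow_da n a s = im_pow n a s + 2 * s * im_pow_ds n a s \<and> im_pow_da n a s = - 2 * re_pow_ds n a s"
  by (induction n) (auto simp: algebra_simps)

theorem corollary3p2:
  fixes n :: nat and p :: "real^4"
  assumes "n \<ge> 1"
  shows "det (jacobian (qpow_map n) (at p)) \<ge> 0"
proof -
  define a where "a = p$1"
  define s where "s = imag_norm2 p"
  have "det (jacobian (qpow_map n) (at p)) =
          (im_pow n a s)^2 * (re_pow_da n a s * (im_pow n a s + 2 * s * im_pow_ds n a s)
                              - 2 * s * re_pow_ds n a s * im_pow_da n a s)"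
    unfolding qpow_map_eq_axial_map a_def s_def
    using has_derivative_re_im_pow by (intro det_jacobian_axial_map) auto
  also have "\<dots> = (im_pow n a s)^2 * ((re_pow_da n a s)^2 + 4 * s * (re_pow_ds n a s)^2)"
    using re_im_pow_cauchy_riemann[of n a s] by (simp add: power2_eq_square algebra_simps)
  also have "\<dots> \<ge> 0"
    using imag_norm2_def s_def by simp
  finally show ?thesis .
qed

end
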